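(* If $G$ is a finite non-commutative group equipped with any stable order, then $N^1(G)=\Omega(n)$.
   Context: A stable order on a monoid $M$ is a partial order with $x\le y\Rightarrow zx\le zy$ and $xz\le yz$ for all $z\in M$. Non-deterministic communication complexity: for $f:X\times Y\to\{0,1\}$, $N^1(f)$ is the minimum cost of a non-deterministic protocol for $f$; equivalently, up to an additive constant 2, $N^1(f)=\log_2 C^1(f)$, where $C^1(f)$ is the minimum number of rectangles $S\times T$ on which $f\equiv1$ whose union is $f^{-1}(1)$. An order ideal is a subset $I\subseteq M$ with $y\in I, x\le y\Rightarrow x\in I$. For an order ideal $I$, $N^1(M,I)(n)$ is $N^1$ of the function where Alice receives $m_1,m_3,\dots,m_{2n-1}\in M$, Bob receives $m_2,\dots,m_{2n}\in M$, with value $1$ iff $m_1\cdots m_{2n}\in I$; $N^1(M)(n)=\max_I N^1(M,I)(n)$. Asymptotics are as $n\to\infty$. *)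

theory Defs
  imports "HOL-Algebra.Group" "HOL-Library.Landau_Symbols" Complex_Main
begin

definition stable_order :: "('a, 'b) monoid_scheme \<Rightarrow> ('a \<Rightarrow> 'a \<Rightarrow> bool) \<Rightarrow> bool" where
  "stable_order M lq \<longleftrightarrow>
     (\<forall>x\<in>carrier M. lq x x) \<and>
     (\<forall>x\<in>carrier M. \<forall>y\<in>carrier M. lq x y \<and> lq y x \<longrightarrow> x = y) \<and>
     (\<forall>x\<in>carrier M. \<forall>y\<in>carrier M. \<forall>z\<in>carrier M. lq x y \<and> lq y z \<longrightarrow> lq x z) \<and>
     (\<forall>x\<in>carrier M. \<forall>y\<in>carrier M. \<forall>z\<in>carrier M. lq x y \<longrightarrow>
         lq (z \<otimes>\<^bsub>M\<^esub> x) (z \<otimes>\<^bsub>M\<^esub> y) \<and> lq (x \<otimes>\<^bsub>M\<^esub> z) (y \<otimes>\<^bsub>M\<^esub> z))"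

definition order_ideal :: "('a, 'b) monoid_scheme \<Rightarrow> ('a \<Rightarrow> 'a \<Rightarrow> bool) \<Rightarrow> 'a set \<Rightarrow> bool" where
  "order_ideal M lq I \<longleftrightarrow> I \<subseteq> carrier M \<and>
     (\<forall>y\<in>I. \<forall>x\<in>carrier M. lq x y \<longrightarrow> x \<in> I)"

definition one_rect :: "'x set \<Rightarrow> 'y set \<Rightarrow> ('x \<Rightarrow> 'y \<Rightarrow> bool) \<Rightarrow> 'x set \<times> 'y set \<Rightarrow> bool" where
  "one_rect X Y f R \<longleftrightarrow> fst R \<subseteq> X \<and> snd R \<subseteq> Y \<and> (\<forall>x\<in>fst R. \<forall>y\<in>snd R. f x y)"

definition C1 :: "'x set \<Rightarrow> 'y set \<Rightarrow> ('x \<Rightarrow> 'y \<Rightarrow> bool) \<Rightarrow> nat" where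
  "C1 X Y f = (LEAST k. \<exists>Rs. finite Rs \<and> card Rs = k \<and> (\<forall>R\<in>Rs. one_rect X Y f R) \<and>
      (\<Union>R\<in>Rs. fst R \<times> snd R) = {(x, y). x \<in> X \<and> y \<in> Y \<and> f x y})"

text \<open>Non-deterministic complexity, taken as log_2 C^1(f) (the additive constant
is irrelevant for the asymptotic statement; max with 1 avoids log 0).\<close>
definition N1 :: "'x set \<Rightarrow> 'y set \<Rightarrow> ('x \<Rightarrow> 'y \<Rightarrow> bool) \<Rightarrow> real" where
  "N1 X Y f = log 2 (real (max 1 (C1 X Y f)))"

text \<open>Product m_1 m_2 ... m_{2n} where Alice holds xs = [m_1, m_3, ...] and
Bob holds ys = [m_2, m_4, ...].\<close>
definition interleaved_prod :: "('a, 'b) monoid_scheme \<Rightarrow> 'a list \<Rightarrow> 'a list \<Rightarrow> 'a" where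
  "interleaved_prod M xs ys =
     foldr (\<lambda>(a, b) acc. a \<otimes>\<^bsub>M\<^esub> b \<otimes>\<^bsub>M\<^esub> acc) (zip xs ys) \<one>\<^bsub>M\<^esub>"

definition inputs :: "('a, 'b) monoid_scheme \<Rightarrow> nat \<Rightarrow> 'a list set" where
  "inputs M n = {xs. length xs = n \<and> set xs \<subseteq> carrier M}"

definition N1_ideal :: "('a, 'b) monoid_scheme \<Rightarrow> 'a set \<Rightarrow> nat \<Rightarrow> real" where
  "N1_ideal M I n = N1 (inputs M n) (inputs M n) (\<lambda>xs ys. interleaved_prod M xs ys \<in> I)"

definition N1_monoid :: "('a, 'b) monoid_scheme \<Rightarrow> ('a \<Rightarrow> 'a \<Rightarrow> bool) \<Rightarrow> nat \<Rightarrow> real" where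
  "N1_monoid M lq n = Max {N1_ideal M I n | I. order_ideal M lq I}"

end

theory Submission
  imports Defs "HOL-Algebra.Multiplicative_Group"
begin

text \<open>
  A stable order on a finite group is discrete: \<open>1 \<le> g\<close> gives \<open>1 \<le> g^k\<close> for every \<open>k\<close>, and
  multiplying \<open>1 \<le> g^(ord g - 1)\<close> by \<open>g\<close> gives \<open>g \<le> 1\<close>. So \<open>{1}\<close> is an order ideal, and it is
  enough to bound the non-deterministic complexity of deciding \<open>m_1 \<cdots> m_2n = 1\<close>.

  Let \<open>a, b\<close> not commute; the commutator \<open>c = a b a^-1 b^-1\<close> has some order \<open>m \<ge> 2\<close>. Alice's
  letter pair \<open>(a, a^-1)\<close> or \<open>(1, 1)\<close> interleaved with Bob's pair \<open>(b, b^-1)\<close> or \<open>(1, 1)\<close> multiplies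
  to \<open>c\<close> if both pairs are non-trivial and to \<open>1\<close> otherwise. Encoding \<open>x, y < m\<close> in unary on an
  \<open>m \<times> m\<close> grid, inputs of length \<open>2m^2 k\<close> produce \<open>c^\<langle>x,y\<rangle>\<close> for \<open>x, y \<in> {0..m-1}^k\<close>, so a
  1-cover for the word problem yields one for the predicate \<open>m dvd \<langle>x,y\<rangle>\<close>. By Parseval for
  characters built from \<open>m\<close>-th roots of unity each 1-rectangle of that predicate has at most
  \<open>m^k\<close> entries, while it has at least \<open>m^(2k-2)\<close> 1-entries. Hence \<open>C^1 \<ge> m^(k-2)\<close>, i.e.
  \<open>N^1 \<ge> k - 2\<close> for \<open>k = n div 2m^2\<close>.
\<close>

section \<open>Characters of the inner product modulo \<open>m\<close>\<close>

fun dot :: "nat list \<Rightarrow> nat list \<Rightarrow> nat" where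
  "dot (x # xs) (y # ys) = x * y + dot xs ys"
| "dot _ _ = 0"

definition vecs :: "nat \<Rightarrow> nat \<Rightarrow> nat list set" where
  "vecs m k = {xs. set xs \<subseteq> {..<m} \<and> length xs = k}"

lemma finite_vecs: "finite (vecs m k)"
  unfolding vecs_def by (rule finite_lists_length_eq) simp

lemma card_vecs: "card (vecs m k) = m ^ k"
  unfolding vecs_def by (subst card_lists_length_eq) simp_all

lemma vecs_0: "vecs m 0 = {[]}"
  by (auto simp: vecs_def)

lemma vecs_Suc: "vecs m (Suc k) = (\<lambda>(a, xs). a # xs) ` ({..<m} \<times> vecs m k)"
  unfolding vecs_def by (auto simp: length_Suc_conv image_iff)

lemma sum_vecs_Suc:
  "(\<Sum>xs\<in>vecs m (Suc k). f xs) = (\<Sum>a<m. \<Sum>xs\<in>vecs m k. f (a # xs))"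
proof -
  have "inj_on (\<lambda>(a, xs). a # xs) ({..<m} \<times> vecs m k)"
    by (auto simp: inj_on_def)
  then have "(\<Sum>xs\<in>vecs m (Suc k). f xs) = (\<Sum>(a, xs)\<in>{..<m} \<times> vecs m k. f (a # xs))"
    unfolding vecs_Suc by (subst sum.reindex) (auto simp: case_prod_beta)
  then show ?thesis
    by (simp add: sum.cartesian_product)
qed

definition root_unity :: "nat \<Rightarrow> complex" where
  "root_unity m = cis (2 * pi / real m)"

lemma root_unity_pow: "root_unity m ^ k = cis (2 * pi * real k / real m)"
  unfolding root_unity_def by (simp add: DeMoivre mult_ac)

lemma root_unity_pow_eq_1_iff:
  assumes "m > 0"
  shows "root_unity m ^ z = 1 \<longleftrightarrow> m dvd z"
proof -
  have "root_unity m ^ z = (root_unity m ^ m) ^ (z div m) * root_unity m ^ (z mod m)"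
    by (simp flip: power_mult power_add)
  also have "root_unity m ^ m = 1"
    using assms by (simp add: root_unity_pow)
  finally have "root_unity m ^ z = cis (2 * pi * real (z mod m) / real m)"
    by (simp add: root_unity_pow)
  moreover have "cis (2 * pi * real (z mod m) / real m) = 1 \<longleftrightarrow> z mod m = 0"
  proof
    assume "cis (2 * pi * real (z mod m) / real m) = 1"
    then have "cis (2 * pi * real (z mod m) / real m) = cis (2 * pi * real (0::nat) / real m)"
      by simp
    moreover have "inj_on (\<lambda>k. cis (2 * pi * real k / real m)) {..<m}"
      using bij_betw_roots_unity[OF assms] by (simp add: bij_betw_def)
    ultimately show "z mod m = 0"
      using assms by (auto dest: inj_onD[of _ _ "z mod m" 0])
  qed simp
  ultimately show ?thesis
    by (simp add: dvd_eq_mod_eq_0)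
qed

lemma cnj_root_unity:
  assumes "m > 0"
  shows "cnj (root_unity m) = root_unity m ^ (m - 1)"
proof -
  have "root_unity m * root_unity m ^ (m - 1) = 1"
    using root_unity_pow_eq_1_iff[OF assms, of m] assms by (simp flip: power_Suc)
  moreover have "root_unity m * cnj (root_unity m) = 1"
    unfolding root_unity_def by (simp add: cis_cnj cis_mult)
  ultimately show ?thesis
    by (metis mult.left_commute mult_1_right)
qed

lemma sum_root_unity_powers:
  assumes "m > 0"
  shows "(\<Sum>a<m. root_unity m ^ (a * z)) = (if m dvd z then of_nat m else 0)"
proof (cases "m dvd z")
  case True
  then have "root_unity m ^ (a * z) = 1" for a
    using root_unity_pow_eq_1_iff[OF assms] by simp
  with True show ?thesis by simp
next
  case False
  let ?q = "root_unity m ^ z"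
  have "?q \<noteq> 1" "?q ^ m = 1"
    using False root_unity_pow_eq_1_iff[OF assms]
    by (simp_all flip: power_mult add: mult.commute[of z])
  then have "(\<Sum>a<m. ?q ^ a) = 0"
    by (simp add: geometric_sum)
  then show ?thesis
    using False by (simp add: power_mult mult.commute[of _ z])
qed

lemma dvd_add_pred_mult_iff:
  assumes "b < m" "b' < (m::nat)"
  shows "m dvd b + (m - 1) * b' \<longleftrightarrow> b = b'"
proof -
  have "int (b + (m - 1) * b') = (int b - int b') + int b' * int m"
    using assms by (cases m) (simp_all add: algebra_simps)
  then have "m dvd b + (m - 1) * b' \<longleftrightarrow> int m dvd (int b - int b') + int b' * int m"
    by (metis int_dvd_int_iff)
  also have "\<dots> \<longleftrightarrow> int m dvd int b - int b'"
    by (rule dvd_add_times_triv_right_iff)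
  also have "\<dots> \<longleftrightarrow> b = b'"
    using assms dvd_imp_le_int[of "int b - int b'" "int m"] by fastforce
  finally show ?thesis .
qed

lemma sum_root_unity_mult_cnj:
  assumes "b < m" "b' < m"
  shows "(\<Sum>a<m. root_unity m ^ (a * b) * cnj (root_unity m ^ (a * b'))) =
    (if b = b' then of_nat m else 0)"
proof -
  have m: "m > 0" using assms by simp
  have "root_unity m ^ (a * b) * cnj (root_unity m ^ (a * b')) =
    root_unity m ^ (a * (b + (m - 1) * b'))" for a
    by (simp add: cnj_root_unity[OF m] algebra_simps flip: power_mult power_add)
  then show ?thesis
    using sum_root_unity_powers[OF m] dvd_add_pred_mult_iff[OF assms] by simp
qed

lemma sum_vecs_root_dot_mult_cnj:
  assumes "y \<in> vecs m k" "y' \<in> vecs m k"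
  shows "(\<Sum>x\<in>vecs m k. root_unity m ^ dot x y * cnj (root_unity m ^ dot x y')) =
    (if y = y' then of_nat (m ^ k) else 0)"
  using assms
proof (induction k arbitrary: y y')
  case 0
  then show ?case by (simp add: vecs_0)
next
  case (Suc k)
  then obtain b ys b' ys' where y: "y = b # ys" "y' = b' # ys'"
    and b: "b < m" "b' < m" and ys: "ys \<in> vecs m k" "ys' \<in> vecs m k"
    by (auto simp: vecs_def length_Suc_conv)
  let ?\<omega> = "root_unity m"
  have "(\<Sum>x\<in>vecs m (Suc k). ?\<omega> ^ dot x y * cnj (?\<omega> ^ dot x y')) =
    (\<Sum>a<m. \<Sum>xs\<in>vecs m k. (?\<omega> ^ (a * b) * cnj (?\<omega> ^ (a * b'))) *
      (?\<omega> ^ dot xs ys * cnj (?\<omega> ^ dot xs ys')))"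
    by (simp add: sum_vecs_Suc y power_add mult_ac)
  also have "\<dots> = (\<Sum>a<m. ?\<omega> ^ (a * b) * cnj (?\<omega> ^ (a * b'))) *
      (\<Sum>xs\<in>vecs m k. ?\<omega> ^ dot xs ys * cnj (?\<omega> ^ dot xs ys'))"
    by (simp add: sum_product)
  finally show ?case
    using sum_root_unity_mult_cnj[OF b] Suc.IH[OF ys] by (simp add: y)
qed

lemma sum_norm_root_dot_sum_squared:
  assumes "T \<subseteq> vecs m k"
  shows "(\<Sum>x\<in>vecs m k. (cmod (\<Sum>y\<in>T. root_unity m ^ dot x y))\<^sup>2) = real (card T * m ^ k)"
proof -
  let ?\<omega> = "root_unity m"
  have "finite T"
    using assms finite_vecs finite_subset by blast
  have "complex_of_real (\<Sum>x\<in>vecs m k. (cmod (\<Sum>y\<in>T. ?\<omega> ^ dot x y))\<^sup>2) =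
    (\<Sum>x\<in>vecs m k. \<Sum>y\<in>T. \<Sum>y'\<in>T. ?\<omega> ^ dot x y * cnj (?\<omega> ^ dot x y'))"
    unfolding of_real_sum complex_norm_square by (simp add: sum_product)
  also have "\<dots> = (\<Sum>y\<in>T. \<Sum>y'\<in>T. \<Sum>x\<in>vecs m k. ?\<omega> ^ dot x y * cnj (?\<omega> ^ dot x y'))"
    by (subst sum.swap) (simp add: sum.swap[of _ "vecs m k" T])
  also have "\<dots> = (\<Sum>y\<in>T. \<Sum>y'\<in>T. if y = y' then of_nat (m ^ k) else 0)"
    using assms by (intro sum.cong refl sum_vecs_root_dot_mult_cnj) auto
  also have "\<dots> = of_nat (card T * m ^ k)"
    using \<open>finite T\<close> by simp
  finally show ?thesis
    by (metis of_real_eq_iff of_real_of_nat_eq)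
qed

lemma card_dvd_dot_rectangle_le:
  assumes m: "m > 0" and S: "S \<subseteq> vecs m k" and T: "T \<subseteq> vecs m k"
    and dvd: "\<forall>x\<in>S. \<forall>y\<in>T. m dvd dot x y"
  shows "card S * card T \<le> m ^ k"
proof -
  define F where "F x = (\<Sum>y\<in>T. root_unity m ^ dot x y)" for x
  have "F x = of_nat (card T)" if "x \<in> S" for x
  proof -
    have "root_unity m ^ dot x y = 1" if "y \<in> T" for y
      using dvd \<open>x \<in> S\<close> that root_unity_pow_eq_1_iff[OF m] by simp
    then show ?thesis by (simp add: F_def)
  qed
  then have "real (card S * card T * card T) = (\<Sum>x\<in>S. (cmod (F x))\<^sup>2)"
    by (simp add: power2_eq_square)
  also have "\<dots> \<le> (\<Sum>x\<in>vecs m k. (cmod (F x))\<^sup>2)"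
    by (rule sum_mono2[OF finite_vecs S]) auto
  also have "\<dots> = real (card T * m ^ k)"
    unfolding F_def by (rule sum_norm_root_dot_sum_squared[OF T])
  finally have "card S * card T * card T \<le> m ^ k * card T"
    by (simp only: of_nat_le_iff mult.commute[of "card T"])
  then show ?thesis
    by (cases "card T = 0") auto
qed

lemma card_dvd_dot_pairs_ge:
  assumes m: "m > 1"
  shows "m ^ (2 * k) \<le> card {(x, y) \<in> vecs m (Suc k) \<times> vecs m (Suc k). m dvd dot x y}"
proof -
  let ?P = "{(x, y) \<in> vecs m (Suc k) \<times> vecs m (Suc k). m dvd dot x y}"
  \<comment> \<open>prepending \<open>1\<close> to \<open>u\<close> and \<open>-\<langle>u,v\<rangle> mod m\<close> to \<open>v\<close> makes the inner product divisible by \<open>m\<close>\<close>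
  define h where "h = (\<lambda>(u, v). (1 # u, (m - 1) * dot u v mod m # v))"
  have "m dvd (m - 1) * d mod m + d" for d
  proof -
    have "(m - 1) * d + d = m * d"
      using m by (cases m) auto
    then have "((m - 1) * d mod m + d) mod m = (m * d) mod m"
      by (metis mod_add_left_eq)
    then show ?thesis by (simp add: dvd_eq_mod_eq_0)
  qed
  then have "h ` (vecs m k \<times> vecs m k) \<subseteq> ?P"
    using m by (auto simp: h_def vecs_def)
  moreover have "inj_on h (vecs m k \<times> vecs m k)"
    by (auto simp: inj_on_def h_def)
  moreover have "finite ?P"
    by (rule finite_subset[of _ "vecs m (Suc k) \<times> vecs m (Suc k)"]) (auto simp: finite_vecs)
  ultimately have "card (vecs m k \<times> vecs m k) \<le> card ?P"
    using card_inj_on_le by blast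
  then show ?thesis
    by (simp add: card_cartesian_product card_vecs mult_2 power_add)
qed

lemma N1_nonneg: "0 \<le> N1 X Y f"
  unfolding N1_def by simp

lemma finite_inputs: "finite (carrier M) \<Longrightarrow> finite (inputs M n)"
  unfolding inputs_def using finite_lists_length_eq[of "carrier M" n] by (simp add: conj_commute)

lemma C1_cover_exists:
  assumes "finite X" "finite Y"
  obtains Rs where "finite Rs" "card Rs = C1 X Y f" "\<forall>R\<in>Rs. one_rect X Y f R"
    "(\<Union>R\<in>Rs. fst R \<times> snd R) = {(x, y). x \<in> X \<and> y \<in> Y \<and> f x y}"
proof -
  let ?ones = "{(x, y). x \<in> X \<and> y \<in> Y \<and> f x y}"
  let ?P = "\<lambda>k. \<exists>Rs. finite Rs \<and> card Rs = k \<and> (\<forall>R\<in>Rs. one_rect X Y f R) \<and>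
      (\<Union>R\<in>Rs. fst R \<times> snd R) = ?ones"
  have "finite ?ones"
    by (rule finite_subset[of _ "X \<times> Y"]) (use assms in auto)
  then have "?P (card ((\<lambda>(x, y). ({x}, {y})) ` ?ones))"
    by (intro exI[of _ "(\<lambda>(x, y). ({x}, {y})) ` ?ones"]) (auto simp: one_rect_def)
  then have "?P (C1 X Y f)"
    unfolding C1_def by (rule LeastI)
  then show ?thesis
    using that by blast
qed

lemma card_ones_le_C1_mult:
  assumes "finite X" "finite Y" "finite A" "finite B"
    and enc: "enA ` A \<subseteq> X" "enB ` B \<subseteq> Y"
    and reduce: "\<And>a b. a \<in> A \<Longrightarrow> b \<in> B \<Longrightarrow> f (enA a) (enB b) \<longleftrightarrow> g a b"
    and rect: "\<And>S T. S \<subseteq> A \<Longrightarrow> T \<subseteq> B \<Longrightarrow> \<forall>a\<in>S. \<forall>b\<in>T. g a b \<Longrightarrow> card S * card T \<le> s"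
  shows "card {(a, b) \<in> A \<times> B. g a b} \<le> C1 X Y f * s"
proof -
  obtain Rs where Rs: "finite Rs" "card Rs = C1 X Y f" "\<forall>R\<in>Rs. one_rect X Y f R"
    "(\<Union>R\<in>Rs. fst R \<times> snd R) = {(x, y). x \<in> X \<and> y \<in> Y \<and> f x y}"
    using C1_cover_exists[OF assms(1,2)] by blast
  define pullback where
    "pullback R = {a \<in> A. enA a \<in> fst R} \<times> {b \<in> B. enB b \<in> snd R}" for R
  have "{(a, b) \<in> A \<times> B. g a b} \<subseteq> (\<Union>R\<in>Rs. pullback R)"
  proof safe
    fix a b assume "a \<in> A" "b \<in> B" "g a b"
    then have "(enA a, enB b) \<in> (\<Union>R\<in>Rs. fst R \<times> snd R)"
      using Rs(4) enc reduce by auto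
    then show "(a, b) \<in> (\<Union>R\<in>Rs. pullback R)"
      using \<open>a \<in> A\<close> \<open>b \<in> B\<close> by (auto simp: pullback_def)
  qed
  then have "card {(a, b) \<in> A \<times> B. g a b} \<le> card (\<Union>R\<in>Rs. pullback R)"
    by (rule card_mono[rotated]) (simp add: pullback_def Rs(1) assms(3,4))
  also have "\<dots> \<le> (\<Sum>R\<in>Rs. card (pullback R))"
    by (rule card_UN_le[OF Rs(1)])
  also have "\<dots> \<le> (\<Sum>R\<in>Rs. s)"
  proof (rule sum_mono)
    fix R assume "R \<in> Rs"
    then have "\<forall>a\<in>{a \<in> A. enA a \<in> fst R}. \<forall>b\<in>{b \<in> B. enB b \<in> snd R}. g a b"
      using Rs(3) reduce unfolding one_rect_def by blast
    then show "card (pullback R) \<le> s"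
      unfolding pullback_def card_cartesian_product by (intro rect) auto
  qed
  finally show ?thesis
    using Rs(2) by simp
qed

lemma real_le_log2_of_pow_le:
  assumes "2 \<le> m" "m ^ j \<le> C"
  shows "real j \<le> log 2 (real (max 1 C))"
proof -
  have "(2::nat) ^ j \<le> max 1 C"
    using assms power_mono[of 2 m j] by simp
  then have "log 2 (2 ^ j) \<le> log 2 (real (max 1 C))"
    by (subst log_le_cancel_iff) (auto simp flip: of_nat_le_iff)
  then show ?thesis by simp
qed

section \<open>Commutator words\<close>

fun count_both :: "bool list \<Rightarrow> bool list \<Rightarrow> nat" where
  "count_both (u # us) (v # vs) = (if u \<and> v then 1 else 0) + count_both us vs"
| "count_both _ _ = 0"

lemma count_both_append:
  "length us = length vs \<Longrightarrow> count_both (us @ us') (vs @ vs') = count_both us vs + count_both us' vs'"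
  by (induction us vs rule: count_both.induct) auto

lemma count_both_concat_map:
  "(\<And>j. j \<in> set js \<Longrightarrow> length (f j) = length (g j)) \<Longrightarrow>
    count_both (concat (map f js)) (concat (map g js)) = (\<Sum>j\<leftarrow>js. count_both (f j) (g j))"
  by (induction js) (auto simp: count_both_append)

lemma count_both_replicate:
  "count_both (replicate (length vs) u) vs = (if u then length (filter (\<lambda>v. v) vs) else 0)"
  by (induction vs) auto

text \<open>Alice marks the first \<open>x\<close> rows of an \<open>m \<times> m\<close> grid and Bob its first \<open>y\<close> columns;
  the marks meet in \<open>x * y\<close> cells.\<close>

definition grid_rows :: "nat \<Rightarrow> nat \<Rightarrow> bool list" where
  "grid_rows m x = concat (map (\<lambda>i. replicate m (i < x)) [0..<m])"

definition grid_cols :: "nat \<Rightarrow> nat \<Rightarrow> bool list" where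
  "grid_cols m y = concat (map (\<lambda>i. map (\<lambda>j. j < y) [0..<m]) [0..<m])"

lemma length_grid_rows: "length (grid_rows m x) = m * m"
  by (simp add: grid_rows_def length_concat sum_list_triv comp_def)

lemma length_grid_cols: "length (grid_cols m y) = m * m"
  by (simp add: grid_cols_def length_concat sum_list_triv comp_def)

lemma count_both_grid:
  assumes "x \<le> m" "y \<le> m"
  shows "count_both (grid_rows m x) (grid_cols m y) = x * y"
proof -
  have "length (filter (\<lambda>j. j < y) [0..<m]) = y"
    using assms(2) by (induction m) auto
  then have "count_both (replicate m (i < x)) (map (\<lambda>j. j < y) [0..<m]) =
      (if i < x then y else 0)" for i
    using count_both_replicate[of "map (\<lambda>j. j < y) [0..<m]" "i < x"] by (simp add: comp_def)
  then have "count_both (grid_rows m x) (grid_cols m y) = (\<Sum>i\<leftarrow>[0..<m]. if i < x then y else 0)"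
    unfolding grid_rows_def grid_cols_def by (simp add: count_both_concat_map)
  also have "\<dots> = (\<Sum>i\<in>{..<m} \<inter> {i. i < x}. y)"
    by (simp add: sum_list_sum_nth atLeast0LessThan sum.If_cases)
  also have "{..<m} \<inter> {i. i < x} = {..<x}"
    using assms(1) by auto
  finally show ?thesis by simp
qed

definition grid_code_rows :: "nat \<Rightarrow> nat list \<Rightarrow> bool list" where
  "grid_code_rows m xs = concat (map (grid_rows m) xs)"

definition grid_code_cols :: "nat \<Rightarrow> nat list \<Rightarrow> bool list" where
  "grid_code_cols m ys = concat (map (grid_cols m) ys)"

lemma length_grid_code_rows: "length (grid_code_rows m xs) = m * m * length xs"
  by (simp add: grid_code_rows_def length_concat length_grid_rows sum_list_triv comp_def)

lemma length_grid_code_cols: "length (grid_code_cols m ys) = m * m * length ys"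
  by (simp add: grid_code_cols_def length_concat length_grid_cols sum_list_triv comp_def)

lemma count_both_grid_code:
  "length xs = length ys \<Longrightarrow> set xs \<subseteq> {..m} \<Longrightarrow> set ys \<subseteq> {..m} \<Longrightarrow>
    count_both (grid_code_rows m xs) (grid_code_cols m ys) = dot xs ys"
  by (induction xs ys rule: dot.induct)
    (auto simp: grid_code_rows_def grid_code_cols_def count_both_append length_grid_rows
      length_grid_cols count_both_grid)

context monoid
begin

lemma interleaved_prod_Nil [simp]: "interleaved_prod G [] ys = \<one>"
  by (simp add: interleaved_prod_def)

lemma interleaved_prod_Cons [simp]:
  "interleaved_prod G (x # xs) (y # ys) = x \<otimes> y \<otimes> interleaved_prod G xs ys"
  by (simp add: interleaved_prod_def)

lemma interleaved_prod_closed: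
  "set xs \<subseteq> carrier G \<Longrightarrow> set ys \<subseteq> carrier G \<Longrightarrow> interleaved_prod G xs ys \<in> carrier G"
proof (induction xs arbitrary: ys)
  case (Cons x xs)
  then show ?case by (cases ys) (auto simp: interleaved_prod_def)
qed simp

lemma interleaved_prod_append_ones:
  "length xs = length ys \<Longrightarrow> set xs \<subseteq> carrier G \<Longrightarrow> set ys \<subseteq> carrier G \<Longrightarrow>
    interleaved_prod G (xs @ replicate r \<one>) (ys @ replicate r \<one>) = interleaved_prod G xs ys"
proof (induction xs ys rule: list_induct2)
  case Nil
  show ?case by (induction r) auto
next
  case (Cons x xs y ys)
  then show ?case by simp
qed

end

definition toggle_word :: "('a, 'b) monoid_scheme \<Rightarrow> 'a \<Rightarrow> bool list \<Rightarrow> 'a list" where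
  "toggle_word G a us = concat (map (\<lambda>u. if u then [a, inv\<^bsub>G\<^esub> a] else [\<one>\<^bsub>G\<^esub>, \<one>\<^bsub>G\<^esub>]) us)"

lemma toggle_word_Nil [simp]: "toggle_word G a [] = []"
  by (simp add: toggle_word_def)

lemma toggle_word_Cons [simp]:
  "toggle_word G a (u # us) =
    (if u then a else \<one>\<^bsub>G\<^esub>) # (if u then inv\<^bsub>G\<^esub> a else \<one>\<^bsub>G\<^esub>) # toggle_word G a us"
  by (simp add: toggle_word_def)

lemma length_toggle_word: "length (toggle_word G a us) = 2 * length us"
  by (induction us) auto

context group
begin

lemma set_toggle_word: "a \<in> carrier G \<Longrightarrow> set (toggle_word G a us) \<subseteq> carrier G"
  by (induction us) auto

lemma interleaved_prod_toggle_word: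
  assumes "a \<in> carrier G" "b \<in> carrier G"
  shows "length us = length vs \<Longrightarrow>
    interleaved_prod G (toggle_word G a us) (toggle_word G b vs) =
      (a \<otimes> b \<otimes> inv a \<otimes> inv b) [^] count_both us vs"
proof (induction us vs rule: count_both.induct)
  case (1 u us v vs)
  have "interleaved_prod G (toggle_word G a us) (toggle_word G b vs) \<in> carrier G"
    using assms by (intro interleaved_prod_closed set_toggle_word)
  with 1 assms show ?case
    by (cases u; cases v) (simp_all add: m_assoc[symmetric] flip: nat_pow_Suc2 del: nat_pow_Suc)
qed auto

lemma commutator_eq_one_iff:
  assumes "a \<in> carrier G" "b \<in> carrier G"
  shows "a \<otimes> b \<otimes> inv a \<otimes> inv b = \<one> \<longleftrightarrow> a \<otimes> b = b \<otimes> a"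
proof -
  have "a \<otimes> b \<otimes> inv a \<otimes> inv b = a \<otimes> b \<otimes> inv (b \<otimes> a)"
    using assms by (simp add: inv_mult_group m_assoc)
  then show ?thesis
    using assms by (simp add: inv_solve_right')
qed

lemma interleaved_prod_grid_code:
  assumes a: "a \<in> carrier G" and b: "b \<in> carrier G" and xy: "xs \<in> vecs m k" "ys \<in> vecs m k"
  shows "interleaved_prod G (toggle_word G a (grid_code_rows m xs) @ replicate r \<one>)
      (toggle_word G b (grid_code_cols m ys) @ replicate r \<one>) =
    (a \<otimes> b \<otimes> inv a \<otimes> inv b) [^] dot xs ys"
proof -
  have len: "length (grid_code_rows m xs) = length (grid_code_cols m ys)"
    using xy by (simp add: vecs_def length_grid_code_rows length_grid_code_cols)
  have "interleaved_prod G (toggle_word G a (grid_code_rows m xs) @ replicate r \<one>)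
      (toggle_word G b (grid_code_cols m ys) @ replicate r \<one>) =
    interleaved_prod G (toggle_word G a (grid_code_rows m xs)) (toggle_word G b (grid_code_cols m ys))"
    using a b len
    by (intro interleaved_prod_append_ones) (simp_all add: length_toggle_word set_toggle_word)
  also have "\<dots> =
      (a \<otimes> b \<otimes> inv a \<otimes> inv b) [^] count_both (grid_code_rows m xs) (grid_code_cols m ys)"
    by (rule interleaved_prod_toggle_word[OF a b len])
  also have "count_both (grid_code_rows m xs) (grid_code_cols m ys) = dot xs ys"
    using xy by (intro count_both_grid_code) (auto simp: vecs_def)
  finally show ?thesis .
qed

lemma pow_le_C1_word_problem:
  assumes fin: "finite (carrier G)" and a: "a \<in> carrier G" and b: "b \<in> carrier G"
    and m: "m = ord (a \<otimes> b \<otimes> inv a \<otimes> inv b)" "2 \<le> m"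
    and n: "2 * m * m * Suc (Suc j) \<le> n"
  shows "m ^ j \<le> C1 (inputs G n) (inputs G n) (\<lambda>xs ys. interleaved_prod G xs ys \<in> {\<one>})"
proof -
  define k where "k = Suc (Suc j)"
  define r where "r = n - 2 * m * m * k"
  define enA where "enA xs = toggle_word G a (grid_code_rows m xs) @ replicate r \<one>" for xs
  define enB where "enB ys = toggle_word G b (grid_code_cols m ys) @ replicate r \<one>" for ys
  let ?C1 = "C1 (inputs G n) (inputs G n) (\<lambda>xs ys. interleaved_prod G xs ys \<in> {\<one>})"
  have "enA ` vecs m k \<subseteq> inputs G n" "enB ` vecs m k \<subseteq> inputs G n"
    using n
    by (auto dest: set_toggle_word[OF a, THEN subsetD] set_toggle_word[OF b, THEN subsetD]
        simp: enA_def enB_def inputs_def vecs_def length_toggle_word length_grid_code_rows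
          length_grid_code_cols r_def k_def)
  moreover have "interleaved_prod G (enA x) (enB y) \<in> {\<one>} \<longleftrightarrow> m dvd dot x y"
    if "x \<in> vecs m k" "y \<in> vecs m k" for x y
    using interleaved_prod_grid_code[OF a b that] pow_eq_id a b m(1) by (simp add: enA_def enB_def)
  ultimately have "card {(x, y) \<in> vecs m k \<times> vecs m k. m dvd dot x y} \<le> ?C1 * m ^ k"
    using m(2) by (intro card_ones_le_C1_mult[where enA = enA and enB = enB,
        OF finite_inputs[OF fin] finite_inputs[OF fin] finite_vecs finite_vecs])
      (auto intro: card_dvd_dot_rectangle_le)
  moreover have "m ^ (2 * Suc j) \<le> card {(x, y) \<in> vecs m k \<times> vecs m k. m dvd dot x y}"
    using card_dvd_dot_pairs_ge[of m "Suc j"] m(2) by (simp add: k_def)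
  moreover have "m ^ (2 * Suc j) = m ^ j * m ^ k"
    by (simp add: k_def mult_2 flip: power_add)
  ultimately have "m ^ j * m ^ k \<le> ?C1 * m ^ k"
    by linarith
  then show ?thesis
    using m(2) by simp
qed

lemma N1_ideal_one_lower_bound:
  assumes fin: "finite (carrier G)" and a: "a \<in> carrier G" and b: "b \<in> carrier G"
    and noncomm: "a \<otimes> b \<noteq> b \<otimes> a"
  obtains L where "L > 0" "\<And>n. real (n div L) - 2 \<le> N1_ideal G {\<one>} n"
proof -
  define m where "m = ord (a \<otimes> b \<otimes> inv a \<otimes> inv b)"
  have "m \<noteq> 1"
    using ord_eq_1 commutator_eq_one_iff[OF a b] noncomm a b by (simp add: m_def)
  moreover have "1 \<le> m"
    unfolding m_def using a b by (intro ord_ge_1 fin) simp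
  ultimately have m: "2 \<le> m"
    by simp
  have "real (n div (2 * m * m)) - 2 \<le> N1_ideal G {\<one>} n" for n
  proof (cases "2 \<le> n div (2 * m * m)")
    case True
    define j where "j = n div (2 * m * m) - 2"
    have "Suc (Suc j) = n div (2 * m * m)"
      using True by (simp add: j_def)
    then have "2 * m * m * Suc (Suc j) \<le> n"
      using times_div_less_eq_dividend[of "2 * m * m" n] by simp
    then have "real j \<le> N1_ideal G {\<one>} n"
      unfolding N1_ideal_def N1_def
      by (rule real_le_log2_of_pow_le[OF m pow_le_C1_word_problem[OF fin a b m_def m]])
    then show ?thesis
      using True by (simp add: j_def of_nat_diff)
  next
    case False
    then have "real (n div (2 * m * m)) - 2 \<le> 0"
      by simp
    then show ?thesis
      using N1_nonneg unfolding N1_ideal_def by (rule order_trans)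
  qed
  moreover have "0 < 2 * m * m"
    using m by simp
  ultimately show ?thesis
    using that by blast
qed

end

section \<open>Stable orders on finite groups\<close>

context group
begin

lemma stable_order_one_le_imp_eq:
  assumes fin: "finite (carrier G)" and lq: "stable_order G lq"
    and g: "g \<in> carrier G" and le: "lq \<one> g"
  shows "g = \<one>"
proof -
  have pow: "lq \<one> (g [^] n)" for n :: nat
  proof (induction n)
    case 0
    then show ?case using lq by (simp add: stable_order_def)
  next
    case (Suc n)
    have "lq (\<one> \<otimes> g) (g [^] n \<otimes> g)"
      using lq Suc g unfolding stable_order_def by blast
    then have "lq g (g [^] Suc n)"
      using g by simp
    then show ?case
      using lq le g unfolding stable_order_def by (meson nat_pow_closed one_closed)
  qed
  obtain j where j: "ord g = Suc j"
    using ord_ge_1[OF fin g] by (cases "ord g") auto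
  have "lq (g \<otimes> \<one>) (g \<otimes> g [^] j)"
    using lq pow[of j] g unfolding stable_order_def by blast
  then have "lq g \<one>"
    using g j pow_ord_eq_1[OF g] by (simp flip: nat_pow_Suc2)
  then show ?thesis
    using lq le g unfolding stable_order_def by blast
qed

lemma stable_order_finite_imp_eq:
  assumes fin: "finite (carrier G)" and lq: "stable_order G lq"
    and x: "x \<in> carrier G" and y: "y \<in> carrier G" and le: "lq x y"
  shows "x = y"
proof -
  have "lq (inv x \<otimes> x) (inv x \<otimes> y)"
    using lq x y le unfolding stable_order_def by blast
  then have "inv x \<otimes> y = \<one>"
    using x y by (intro stable_order_one_le_imp_eq[OF fin lq]) simp_all
  then show ?thesis
    using x y by (simp add: inv_solve_left')
qed

lemma order_ideal_finite:
  assumes "finite (carrier G)" "stable_order G lq" "I \<subseteq> carrier G"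
  shows "order_ideal G lq I"
  using assms stable_order_finite_imp_eq unfolding order_ideal_def by blast

end

lemma N1_ideal_le_N1_monoid:
  assumes "finite (carrier M)" "order_ideal M lq I"
  shows "N1_ideal M I n \<le> N1_monoid M lq n"
  unfolding N1_monoid_def
proof (rule Max_ge)
  show "finite {N1_ideal M I n |I. order_ideal M lq I}"
    by (rule finite_subset[of _ "(\<lambda>I. N1_ideal M I n) ` Pow (carrier M)"])
      (use assms(1) in \<open>auto simp: order_ideal_def\<close>)
qed (use assms(2) in blast)

lemma real_div_minus_1_le_real_of_nat_div:
  assumes "(0::nat) < L"
  shows "real n / real L - 1 \<le> real (n div L)"
proof -
  have "real n = real L * real (n div L) + real (n mod L)"
    by (metis of_nat_add of_nat_mult mult_div_mod_eq)
  moreover have "real (n mod L) < real L"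
    using assms by simp
  ultimately show ?thesis
    using assms by (simp add: field_simps)
qed

lemma bigomega_of_div_lower_bound:
  fixes f :: "nat \<Rightarrow> real"
  assumes L: "L > 0" and f: "\<And>n. real (n div L) - c \<le> f n"
  shows "f \<in> \<Omega>(\<lambda>n. real n)"
proof (rule landau_omega.bigI[of "1 / (2 * real L)"])
  show "0 < 1 / (2 * real L)"
    using L by simp
  have "\<forall>\<^sub>F n in at_top. 2 * real L * (c + 1) \<le> real n"
    by (rule eventually_compose_filterlim[OF eventually_ge_at_top filterlim_real_sequentially])
  then show "\<forall>\<^sub>F n in at_top. 1 / (2 * real L) * norm (real n) \<le> norm (f n)"
  proof eventually_elim
    case (elim n)
    then have "1 / (2 * real L) * real n \<le> real n / real L - 1 - c"
      using L by (simp add: field_simps)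
    also have "\<dots> \<le> f n"
      using real_div_minus_1_le_real_of_nat_div[OF L, of n] f[of n] by linarith
    finally show ?case
      by simp
  qed
qed

theorem mainTheorem11:
  fixes G :: "('a, 'b) monoid_scheme" and lq :: "'a \<Rightarrow> 'a \<Rightarrow> bool"
  assumes "group G" and "finite (carrier G)"
    and "\<exists>x\<in>carrier G. \<exists>y\<in>carrier G. x \<otimes>\<^bsub>G\<^esub> y \<noteq> y \<otimes>\<^bsub>G\<^esub> x"
    and "stable_order G lq"
  shows "N1_monoid G lq \<in> \<Omega>(\<lambda>n. real n)"
proof -
  interpret group G by fact
  obtain a b where ab: "a \<in> carrier G" "b \<in> carrier G" "a \<otimes>\<^bsub>G\<^esub> b \<noteq> b \<otimes>\<^bsub>G\<^esub> a"
    using assms(3) by blast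
  obtain L where "L > 0" and L: "\<And>n. real (n div L) - 2 \<le> N1_ideal G {\<one>\<^bsub>G\<^esub>} n"
    using N1_ideal_one_lower_bound[OF assms(2) ab] by blast
  have "order_ideal G lq {\<one>\<^bsub>G\<^esub>}"
    using order_ideal_finite[OF assms(2,4)] by simp
  then have "real (n div L) - 2 \<le> N1_monoid G lq n" for n
    using L[of n] N1_ideal_le_N1_monoid[OF assms(2)] by (meson order_trans)
  then show ?thesis
    by (rule bigomega_of_div_lower_bound[OF \<open>L > 0\<close>])
qed

end
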